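(* Let $M$ be an entrywise nonnegative $m\times n$ real matrix and let $M=AW$ with $A\in\mathbb{R}_{\ge0}^{m\times r}$ and $W\in\mathbb{R}_{\ge0}^{r\times n}$. Then there exist $\tilde A\in\mathbb{R}_{\ge0}^{m\times r}$ and $\tilde W\in\mathbb{R}_{\ge0}^{r\times n}$ with $M=\tilde A\tilde W$ such that the factorization $M=\tilde A\tilde W$ is stable.
   Context: Notation: $M_i$ denotes the $i$-th column and $M^j$ the $j$-th row of a matrix $M$; for a set $S$ of column indices, $A_S$ is the submatrix of columns of $A$ indexed by $S$, and for a set $T$ of row indices $W^T$ is the submatrix of rows indexed by $T$. For a matrix $A$ with columns $A_1,\dots,A_r$, let $\mathrm{aff}(A)=\{\sum_i\alpha_iA_i:\alpha_i\ge0\ \forall i\}$ (the set of nonnegative combinations of the columns). Given $A$ ($m\times r$) and $v\in\mathbb{R}^m$, a subset $S\subseteq[r]$ of columns of $A$ is admissible for $v$ if $v\in\mathrm{aff}(A_S)$; analogously, a subset $T\subseteq[r]$ of rows of $W$ is admissible for a row vector $u\in\mathbb{R}^{1\times n}$ if $u$ is a nonnegative combination of the rows of $W^T$. Lexicographic ordering on subsets of $[r]$: if $|S|<|T|$ then $S$ precedes $T$; subsets of equal size are compared by the standard lexicographic order. The support of a vector is the set of indices of its nonzero entries. A factorization $M=AW$ (with $A,W$ nonnegative, inner dimension $r$) is stable if, letting $S_i$ be the lexicographically first subset of columns of $A$ admissible for $M_i$ and $T_j$ the lexicographically first subset of rows of $W$ admissible for $M^j$: (1) for each $i$, $W_i$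 is supported in $S_i$, and (2) for each $j$, the row $A^j$ is supported in $T_j$. *)

theory Defs
  imports Complex_Main
begin

text \<open>Matrices of varying size are represented as functions nat => nat => real;
  an m x n matrix M has entries M i j for i < m, j < n (0-based indices).
  Entries outside the index range are irrelevant.\<close>

definition nonneg_mat :: "nat \<Rightarrow> nat \<Rightarrow> (nat \<Rightarrow> nat \<Rightarrow> real) \<Rightarrow> bool" where
  "nonneg_mat p q X \<longleftrightarrow> (\<forall>i<p. \<forall>j<q. X i j \<ge> 0)"

definition is_factorization ::
  "nat \<Rightarrow> nat \<Rightarrow> nat \<Rightarrow> (nat \<Rightarrow> nat \<Rightarrow> real) \<Rightarrow> (nat \<Rightarrow> nat \<Rightarrow> real) \<Rightarrow> (nat \<Rightarrow> nat \<Rightarrow> real) \<Rightarrow> bool" where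
  "is_factorization m n r M A W \<longleftrightarrow> (\<forall>i<m. \<forall>j<n. M i j = (\<Sum>k<r. A i k * W k j))"

definition col_admissible ::
  "nat \<Rightarrow> nat \<Rightarrow> (nat \<Rightarrow> nat \<Rightarrow> real) \<Rightarrow> (nat \<Rightarrow> real) \<Rightarrow> nat set \<Rightarrow> bool" where
  "col_admissible m r A v S \<longleftrightarrow> S \<subseteq> {..<r} \<and>
     (\<exists>\<alpha>::nat \<Rightarrow> real. (\<forall>k\<in>S. \<alpha> k \<ge> 0) \<and> (\<forall>i<m. v i = (\<Sum>k\<in>S. \<alpha> k * A i k)))"

definition row_admissible ::
  "nat \<Rightarrow> nat \<Rightarrow> (nat \<Rightarrow> nat \<Rightarrow> real) \<Rightarrow> (nat \<Rightarrow> real) \<Rightarrow> nat set \<Rightarrow> bool" where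
  "row_admissible n r W u T \<longleftrightarrow> T \<subseteq> {..<r} \<and>
     (\<exists>\<beta>::nat \<Rightarrow> real. (\<forall>k\<in>T. \<beta> k \<ge> 0) \<and> (\<forall>j<n. u j = (\<Sum>k\<in>T. \<beta> k * W k j)))"

definition lex_precedes :: "nat set \<Rightarrow> nat set \<Rightarrow> bool" where
  "lex_precedes S T \<longleftrightarrow> card S < card T \<or>
     (card S = card T \<and>
      (sorted_list_of_set S, sorted_list_of_set T) \<in> lexord {(a, b). a < b})"

definition lex_first :: "(nat set \<Rightarrow> bool) \<Rightarrow> nat set \<Rightarrow> bool" where
  "lex_first P S \<longleftrightarrow> P S \<and> (\<forall>T. P T \<and> T \<noteq> S \<longrightarrow> lex_precedes S T)"

definition stable_factorization ::
  "nat \<Rightarrow> nat \<Rightarrow> nat \<Rightarrow> (nat \<Rightarrow> nat \<Rightarrow> real) \<Rightarrow> (nat \<Rightarrow> nat \<Rightarrow> real) \<Rightarrow> (nat \<Rightarrow> nat \<Rightarrow> real) \<Rightarrow> bool" where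
  "stable_factorization m n r M A W \<longleftrightarrow>
     (\<forall>i<n. \<forall>S. lex_first (col_admissible m r A (\<lambda>a. M a i)) S \<longrightarrow>
        (\<forall>k<r. k \<notin> S \<longrightarrow> W k i = 0)) \<and>
     (\<forall>j<m. \<forall>T. lex_first (row_admissible n r W (\<lambda>b. M j b)) T \<longrightarrow>
        (\<forall>k<r. k \<notin> T \<longrightarrow> A j k = 0))"

end

theory Submission
  imports Defs
begin

text \<open>Measure a factorisation by the sum, over the columns of W and the rows of A, of the
  position of their supports in the lexicographic order on subsets of {..<r}.  If a column
  W_i violates stability, the lexicographically first admissible set S for M_i comes strictly
  before the support of W_i (which is admissible), and rewriting W_i as the representation
  of M_i on S keeps M = A W, has support exactly S, and lowers the measure; rows of A are the
  same argument for the transposed factorisation M^T = W^T A^T.  A factorisation of least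
  measure is therefore stable.\<close>

lemma lex_precedes_irrefl: "\<not> lex_precedes S S"
  unfolding lex_precedes_def using lexord_irreflexive[of "{(a::nat, b). a < b}"] by auto

lemma lex_precedes_trans:
  assumes "lex_precedes S T" and "lex_precedes T U"
  shows "lex_precedes S U"
proof (cases "card S < card T \<or> card T < card U")
  case True
  then show ?thesis using assms unfolding lex_precedes_def by linarith
next
  case False
  have "trans {(a::nat, b). a < b}" by (auto simp: trans_def)
  with False assms show ?thesis
    unfolding lex_precedes_def by (auto intro: lexord_trans)
qed

definition lex_rank :: "nat \<Rightarrow> nat set \<Rightarrow> nat" where
  "lex_rank r S = card {T. T \<subseteq> {..<r} \<and> lex_precedes T S}"

lemma lex_rank_strict_mono:
  assumes "S \<subseteq> {..<r}" and "lex_precedes S T"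
  shows "lex_rank r S < lex_rank r T"
proof -
  let ?below = "\<lambda>S. {U. U \<subseteq> {..<r} \<and> lex_precedes U S}"
  have "?below S \<subseteq> ?below T" using assms(2) lex_precedes_trans by blast
  moreover have "S \<in> ?below T - ?below S" using assms lex_precedes_irrefl by blast
  ultimately have "?below S \<subset> ?below T" by blast
  moreover have "finite (?below T)" by (rule finite_subset[of _ "Pow {..<r}"]) auto
  ultimately show ?thesis unfolding lex_rank_def by (rule psubset_card_mono[rotated])
qed

definition col_support :: "nat \<Rightarrow> (nat \<Rightarrow> nat \<Rightarrow> real) \<Rightarrow> nat \<Rightarrow> nat set" where
  "col_support r W i = {k. k < r \<and> W k i \<noteq> 0}"

definition support_rank_sum :: "nat \<Rightarrow> nat \<Rightarrow> (nat \<Rightarrow> nat \<Rightarrow> real) \<Rightarrow> nat" where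
  "support_rank_sum n r W = (\<Sum>i<n. lex_rank r (col_support r W i))"

lemma col_admissible_col_support:
  assumes "nonneg_mat r n W" and "is_factorization m n r M A W" and "i < n"
  shows "col_admissible m r A (\<lambda>a. M a i) (col_support r W i)"
  unfolding col_admissible_def
proof (intro conjI exI[of _ "\<lambda>k. W k i"] allI impI ballI)
  show "col_support r W i \<subseteq> {..<r}" by (auto simp: col_support_def)
  show "0 \<le> W k i" if "k \<in> col_support r W i" for k
    using that assms(1,3) by (auto simp: col_support_def nonneg_mat_def)
  fix a assume "a < m"
  then have "M a i = (\<Sum>k<r. A a k * W k i)"
    using assms(2,3) by (simp add: is_factorization_def)
  also have "\<dots> = (\<Sum>k\<in>col_support r W i. A a k * W k i)"
    by (rule sum.mono_neutral_right) (auto simp: col_support_def)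
  also have "\<dots> = (\<Sum>k\<in>col_support r W i. W k i * A a k)"
    by (simp add: mult.commute)
  finally show "M a i = (\<Sum>k\<in>col_support r W i. W k i * A a k)" .
qed

text \<open>Dropping the zero coefficients of a representation gives an admissible subset, which
  must be S itself since a proper subset has smaller cardinality.\<close>
lemma lex_first_col_admissible_coeffs_nonzero:
  assumes first: "lex_first (col_admissible m r A v) S"
    and nonneg: "\<forall>k\<in>S. \<alpha> k \<ge> 0" and repr: "\<forall>a<m. v a = (\<Sum>k\<in>S. \<alpha> k * A a k)"
    and "k \<in> S"
  shows "\<alpha> k \<noteq> 0"
proof
  assume "\<alpha> k = 0"
  define S' where "S' = {k\<in>S. \<alpha> k \<noteq> 0}"
  have "S \<subseteq> {..<r}" using first by (simp add: lex_first_def col_admissible_def)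
  then have "finite S" by (rule finite_subset) simp
  have "col_admissible m r A v S'"
    unfolding col_admissible_def
  proof (intro conjI exI[of _ \<alpha>] allI impI ballI)
    show "S' \<subseteq> {..<r}" using \<open>S \<subseteq> {..<r}\<close> by (auto simp: S'_def)
    show "0 \<le> \<alpha> k" if "k \<in> S'" for k using that nonneg by (simp add: S'_def)
    fix a assume "a < m"
    have "(\<Sum>k\<in>S. \<alpha> k * A a k) = (\<Sum>k\<in>S'. \<alpha> k * A a k)"
      by (rule sum.mono_neutral_right) (auto simp: S'_def \<open>finite S\<close>)
    then show "v a = (\<Sum>k\<in>S'. \<alpha> k * A a k)" using repr \<open>a < m\<close> by simp
  qed
  moreover have "S' \<subset> S" using \<open>k \<in> S\<close> \<open>\<alpha> k = 0\<close> by (auto simp: S'_def)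
  ultimately have "card S \<le> card S'"
    using first by (auto simp: lex_first_def lex_precedes_def)
  moreover have "card S' < card S" using \<open>S' \<subset> S\<close> \<open>finite S\<close> by (rule psubset_card_mono[rotated])
  ultimately show False by simp
qed

lemma lex_first_col_admissible_column:
  assumes "lex_first (col_admissible m r A v) S"
  obtains w where "\<forall>k. w k \<ge> 0" and "{k. k < r \<and> w k \<noteq> 0} = S"
    and "\<forall>a<m. v a = (\<Sum>k<r. A a k * w k)"
proof -
  obtain \<alpha> where S: "S \<subseteq> {..<r}" and nonneg: "\<forall>k\<in>S. \<alpha> k \<ge> 0"
    and repr: "\<forall>a<m. v a = (\<Sum>k\<in>S. \<alpha> k * A a k)"
    using assms by (auto simp: lex_first_def col_admissible_def)
  define w where "w k = (if k \<in> S then \<alpha> k else 0)" for k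
  show thesis
  proof
    show "\<forall>k. w k \<ge> 0" using nonneg by (simp add: w_def)
    show "{k. k < r \<and> w k \<noteq> 0} = S"
      using S lex_first_col_admissible_coeffs_nonzero[OF assms nonneg repr] by (auto simp: w_def)
    show "\<forall>a<m. v a = (\<Sum>k<r. A a k * w k)"
    proof (intro allI impI)
      fix a assume "a < m"
      have "(\<Sum>k<r. A a k * w k) = (\<Sum>k\<in>{..<r} \<inter> S. \<alpha> k * A a k)"
        by (simp add: w_def sum.inter_restrict[symmetric] mult.commute if_distrib cong: if_cong)
      also have "{..<r} \<inter> S = S" using S by blast
      finally show "v a = (\<Sum>k<r. A a k * w k)" using repr \<open>a < m\<close> by simp
    qed
  qed
qed

lemma is_factorization_update_column:
  assumes "is_factorization m n r M A W" and "\<forall>a<m. M a i = (\<Sum>k<r. A a k * w k)"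
  shows "is_factorization m n r M A (\<lambda>k j. if j = i then w k else W k j)"
  unfolding is_factorization_def
proof (intro allI impI)
  fix a j assume "a < m" "j < n"
  then show "M a j = (\<Sum>k<r. A a k * (if j = i then w k else W k j))"
    using assms by (cases "j = i") (simp_all add: is_factorization_def)
qed

lemma support_rank_sum_update_column_less:
  assumes "i < n" and "lex_rank r {k. k < r \<and> w k \<noteq> 0} < lex_rank r (col_support r W i)"
  shows "support_rank_sum n r (\<lambda>k j. if j = i then w k else W k j) < support_rank_sum n r W"
  unfolding support_rank_sum_def
proof (rule sum_strict_mono_ex1)
  have "col_support r (\<lambda>k j. if j = i then w k else W k j) j =
      (if j = i then {k. k < r \<and> w k \<noteq> 0} else col_support r W j)" for j
    by (simp add: col_support_def)
  then show "\<forall>j\<in>{..<n}. lex_rank r (col_support r (\<lambda>k j. if j = i then w k else W k j) j)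
      \<le> lex_rank r (col_support r W j)"
    and "\<exists>j\<in>{..<n}. lex_rank r (col_support r (\<lambda>k j. if j = i then w k else W k j) j)
      < lex_rank r (col_support r W j)"
    using assms by auto
qed simp

lemma column_stable_of_support_rank_sum_minimal:
  assumes nonneg: "nonneg_mat r n W" and fact: "is_factorization m n r M A W"
    and minimal: "\<And>W'. nonneg_mat r n W' \<Longrightarrow> is_factorization m n r M A W' \<Longrightarrow>
        support_rank_sum n r W \<le> support_rank_sum n r W'"
    and "i < n" and first: "lex_first (col_admissible m r A (\<lambda>a. M a i)) S"
    and "k < r" and "k \<notin> S"
  shows "W k i = 0"
proof (rule ccontr)
  assume "W k i \<noteq> 0"
  obtain w where w_nonneg: "\<forall>k. w k \<ge> 0" and w_supp: "{k. k < r \<and> w k \<noteq> 0} = S"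
    and w_repr: "\<forall>a<m. M a i = (\<Sum>k<r. A a k * w k)"
    using lex_first_col_admissible_column[OF first] by blast
  define W' where "W' = (\<lambda>k j. if j = i then w k else W k j)"
  have "col_support r W i \<noteq> S" using \<open>k < r\<close> \<open>k \<notin> S\<close> \<open>W k i \<noteq> 0\<close> by (auto simp: col_support_def)
  then have "lex_precedes S (col_support r W i)"
    using first col_admissible_col_support[OF nonneg fact \<open>i < n\<close>] by (simp add: lex_first_def)
  moreover have "S \<subseteq> {..<r}" using w_supp by blast
  ultimately have "lex_rank r S < lex_rank r (col_support r W i)" by (rule lex_rank_strict_mono[rotated])
  then have "support_rank_sum n r W' < support_rank_sum n r W"
    unfolding W'_def using support_rank_sum_update_column_less \<open>i < n\<close> w_supp by blast
  moreover have "nonneg_mat r n W'" using nonneg w_nonneg by (simp add: W'_def nonneg_mat_def)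
  moreover have "is_factorization m n r M A W'"
    unfolding W'_def using fact w_repr by (rule is_factorization_update_column)
  ultimately show False using minimal by fastforce
qed

definition mat_transpose :: "(nat \<Rightarrow> nat \<Rightarrow> real) \<Rightarrow> nat \<Rightarrow> nat \<Rightarrow> real" where
  "mat_transpose X = (\<lambda>a b. X b a)"

lemma mat_transpose_transpose [simp]: "mat_transpose (mat_transpose X) = X"
  by (simp add: mat_transpose_def)

lemma nonneg_mat_transpose: "nonneg_mat q p (mat_transpose X) \<longleftrightarrow> nonneg_mat p q X"
  by (auto simp: nonneg_mat_def mat_transpose_def)

lemma is_factorization_transpose:
  "is_factorization n m r (mat_transpose M) (mat_transpose W) (mat_transpose A) \<longleftrightarrow>
   is_factorization m n r M A W"
  by (auto simp: is_factorization_def mat_transpose_def mult.commute)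

lemma row_admissible_eq_col_admissible_transpose:
  "row_admissible n r W u = col_admissible n r (mat_transpose W) u"
  by (simp add: fun_eq_iff row_admissible_def col_admissible_def mat_transpose_def)

lemma row_stable_of_support_rank_sum_minimal:
  assumes nonneg: "nonneg_mat m r A" and fact: "is_factorization m n r M A W"
    and minimal: "\<And>A'. nonneg_mat m r A' \<Longrightarrow> is_factorization m n r M A' W \<Longrightarrow>
        support_rank_sum m r (mat_transpose A) \<le> support_rank_sum m r (mat_transpose A')"
    and "j < m" and first: "lex_first (row_admissible n r W (\<lambda>b. M j b)) T"
    and "k < r" and "k \<notin> T"
  shows "A j k = 0"
proof -
  have "mat_transpose A k j = 0"
  proof (rule column_stable_of_support_rank_sum_minimal)
    show "nonneg_mat r m (mat_transpose A)" using nonneg by (simp add: nonneg_mat_transpose)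
    show "is_factorization n m r (mat_transpose M) (mat_transpose W) (mat_transpose A)"
      using fact by (simp add: is_factorization_transpose)
    show "support_rank_sum m r (mat_transpose A) \<le> support_rank_sum m r W'"
      if "nonneg_mat r m W'" "is_factorization n m r (mat_transpose M) (mat_transpose W) W'" for W'
      using minimal[of "mat_transpose W'"] that
        nonneg_mat_transpose[where X = "mat_transpose W'"]
        is_factorization_transpose[where A = "mat_transpose W'"]
      by simp
    show "lex_first (col_admissible n r (mat_transpose W) (\<lambda>b. mat_transpose M b j)) T"
      using first by (simp add: row_admissible_eq_col_admissible_transpose mat_transpose_def)
  qed fact+
  then show ?thesis by (simp add: mat_transpose_def)
qed

theorem mainTheorem3:
  fixes m n r :: nat and M A W :: "nat \<Rightarrow> nat \<Rightarrow> real"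
  assumes "nonneg_mat m n M"
    and "nonneg_mat m r A"
    and "nonneg_mat r n W"
    and "is_factorization m n r M A W"
  shows "\<exists>A' W'. nonneg_mat m r A' \<and> nonneg_mat r n W' \<and>
           is_factorization m n r M A' W' \<and> stable_factorization m n r M A' W'"
proof -
  define feasible where "feasible = (\<lambda>(A', W'). nonneg_mat m r A' \<and> nonneg_mat r n W' \<and>
      is_factorization m n r M A' W')"
  define potential where "potential = (\<lambda>(A', W').
      support_rank_sum n r W' + support_rank_sum m r (mat_transpose A'))"
  obtain A0 W0 where feasible0: "feasible (A0, W0)"
    and least: "\<And>p. feasible p \<Longrightarrow> potential (A0, W0) \<le> potential p"
    using ex_has_least_nat[of feasible "(A, W)" potential] assms(2-4)
    by (auto simp: feasible_def)
  then have "nonneg_mat m r A0" "nonneg_mat r n W0" "is_factorization m n r M A0 W0"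
    by (auto simp: feasible_def)
  moreover have "stable_factorization m n r M A0 W0"
    unfolding stable_factorization_def
    using column_stable_of_support_rank_sum_minimal[OF calculation(2,3)]
      row_stable_of_support_rank_sum_minimal[OF calculation(1,3)]
      least feasible0 by (fastforce simp: feasible_def potential_def)
  ultimately show ?thesis by blast
qed

end
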